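(* In the continuous Donation Game, for every $\gamma\in\mathbb{R}$ there do not exist a bounded measurable $\psi:[0,K]\to\mathbb{R}$, a probability measure $\sigma_X^0$ on $[0,K]$ and a Markov kernel $\sigma_X[x,y]$ from $[0,K]^2$ to $[0,K]$ such that for all $x,y\in[0,K]$, $$u_X(x,y)-\gamma=\psi(x)-\lambda\int\psi(s)\,d\sigma_X[x,y](s)-(1-\lambda)\int\psi(s)\,d\sigma_X^0(s).$$
   Context: Continuous Donation Game: fix $K>0$ and measurable nondecreasing functions $b,c:[0,K]\to\mathbb{R}$ with $b(0)=c(0)=0$ and $b(s)>c(s)$ for $s>0$. Action spaces $S_X=S_Y=[0,K]$, payoffs $u_X(x,y)=b(y)-c(x)$, $u_Y(x,y)=b(x)-c(y)$, discount factor $\lambda\in(0,1)$. *)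

theory Defs
  imports "HOL-Probability.Probability"
begin

definition act_space :: "real \<Rightarrow> real measure" where
  "act_space K = restrict_space borel {0..K}"

definition donation_game :: "real \<Rightarrow> (real \<Rightarrow> real) \<Rightarrow> (real \<Rightarrow> real) \<Rightarrow> bool" where
  "donation_game K b c \<longleftrightarrow> K > 0
     \<and> b \<in> borel_measurable (act_space K) \<and> c \<in> borel_measurable (act_space K)
     \<and> mono_on {0..K} b \<and> mono_on {0..K} c
     \<and> b 0 = 0 \<and> c 0 = 0 \<and> (\<forall>s\<in>{0<..K}. b s > c s)"

definition u_X :: "(real \<Rightarrow> real) \<Rightarrow> (real \<Rightarrow> real) \<Rightarrow> real \<Rightarrow> real \<Rightarrow> real" where
  "u_X b c x y = b y - c x"

end

theory Submission
  imports Defs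
begin

text \<open>Let \<open>M\<close> and \<open>m\<close> be the supremum and infimum of \<open>\<psi>\<close> on \<open>[0,K]\<close>. Comparing the identity
  at \<open>(x\<^sub>1, 0)\<close> with the one at \<open>(x\<^sub>2, K)\<close> and bounding both integrals by \<open>m\<close> and \<open>M\<close> gives
  \<open>\<psi> x\<^sub>1 - \<psi> x\<^sub>2 \<le> \<lambda> (M - m) + c K - b K\<close>, since \<open>c\<close> is monotone with \<open>c 0 = 0\<close> and \<open>b 0 = 0\<close>.
  Taking the supremum over \<open>x\<^sub>1\<close> and the infimum over \<open>x\<^sub>2\<close> yields
  \<open>(1 - \<lambda>) (M - m) \<le> c K - b K < 0\<close>, which is impossible.\<close>

lemma (in prob_space) integral_between_bounds:
  fixes f :: "'a \<Rightarrow> real"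
  assumes f: "f \<in> borel_measurable M"
    and bounds: "\<And>x. x \<in> space M \<Longrightarrow> a \<le> f x \<and> f x \<le> b"
  shows "a \<le> (\<integral>x. f x \<partial>M) \<and> (\<integral>x. f x \<partial>M) \<le> b"
proof -
  have "integrable M f"
    using bounds by (intro integrable_const_bound[where B = "max \<bar>a\<bar> \<bar>b\<bar>"] AE_I2 f) force
  moreover have "AE x in M. a \<le> f x" "AE x in M. f x \<le> b"
    using bounds by (auto intro: AE_I2)
  ultimately show ?thesis
    using integral_ge_const integral_le_const by blast
qed

lemma space_act_space [simp]: "space (act_space K) = {0..K}"
  by (simp add: act_space_def space_restrict_space)

lemma integral_act_space_between_bounds:
  fixes f :: "real \<Rightarrow> real"
  assumes N: "N \<in> space (prob_algebra (act_space K))"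
    and f: "f \<in> borel_measurable (act_space K)"
    and bounds: "\<And>s. s \<in> {0..K} \<Longrightarrow> a \<le> f s \<and> f s \<le> b"
  shows "a \<le> (\<integral>s. f s \<partial>N) \<and> (\<integral>s. f s \<partial>N) \<le> b"
proof -
  have sets_N: "sets N = sets (act_space K)" and prob_N: "prob_space N"
    using N by (auto simp: space_prob_algebra)
  interpret prob_space N by (fact prob_N)
  show ?thesis
  proof (rule integral_between_bounds)
    show "f \<in> borel_measurable N"
      using f measurable_cong_sets[OF sets_N refl] by blast
    show "a \<le> f s \<and> f s \<le> b" if "s \<in> space N" for s
      using bounds that sets_eq_imp_space_eq[OF sets_N] by simp
  qed
qed

lemma SUP_minus_INF_le:
  fixes f :: "'a \<Rightarrow> real"
  assumes "A \<noteq> {}" and "bdd_below (f ` A)"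
    and gap: "\<And>x y. x \<in> A \<Longrightarrow> y \<in> A \<Longrightarrow> f x - f y \<le> r"
  shows "(SUP x\<in>A. f x) - (INF y\<in>A. f y) \<le> r"
proof -
  have "(SUP x\<in>A. f x) \<le> f y + r" if "y \<in> A" for y
    using assms(1) gap[OF _ that] by (intro cSUP_least) (auto simp: algebra_simps)
  then have "(SUP x\<in>A. f x) - r \<le> (INF y\<in>A. f y)"
    using assms(1) by (intro cINF_greatest) (auto simp: algebra_simps)
  then show ?thesis by simp
qed

lemma donation_game_psi_gap:
  assumes game: "donation_game K b c" and "0 < lam"
    and identity: "\<And>x y. x \<in> {0..K} \<Longrightarrow> y \<in> {0..K} \<Longrightarrow>
                     u_X b c x y - gamma = psi x - lam * v x y - C"
    and v_bounds: "\<And>x y. x \<in> {0..K} \<Longrightarrow> y \<in> {0..K} \<Longrightarrow> m \<le> v x y \<and> v x y \<le> M"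
    and x1: "x1 \<in> {0..K}" and x2: "x2 \<in> {0..K}"
  shows "psi x1 - psi x2 \<le> lam * (M - m) + c K - b K"
proof -
  have "0 \<le> K" and c_mono: "mono_on {0..K} c" and "b 0 = 0" and "c 0 = 0"
    using game by (auto simp: donation_game_def)
  then have "c 0 \<le> c x1" "c x2 \<le> c K"
    using mono_onD[OF c_mono, of 0 x1] mono_onD[OF c_mono, of x2 K] x1 x2 by auto
  moreover have "lam * v x1 0 \<le> lam * M" "lam * m \<le> lam * v x2 K"
    using v_bounds x1 x2 \<open>0 \<le> K\<close> \<open>0 < lam\<close> by (auto intro: mult_left_mono)
  moreover have "b 0 - c x1 - gamma = psi x1 - lam * v x1 0 - C"
    and "b K - c x2 - gamma = psi x2 - lam * v x2 K - C"
    using identity x1 x2 \<open>0 \<le> K\<close> by (auto simp: u_X_def)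
  ultimately show ?thesis
    unfolding right_diff_distrib using \<open>b 0 = 0\<close> \<open>c 0 = 0\<close> by linarith
qed

theorem mainTheorem15:
  fixes K lam gamma :: real and b c :: "real \<Rightarrow> real"
  assumes "donation_game K b c"
    and "0 < lam" and "lam < 1"
  shows "\<not> (\<exists>(psi :: real \<Rightarrow> real) (sigma0 :: real measure) (sigma :: real \<Rightarrow> real \<Rightarrow> real measure).
            psi \<in> borel_measurable (act_space K)
          \<and> (\<exists>B. \<forall>s\<in>{0..K}. \<bar>psi s\<bar> \<le> B)
          \<and> sigma0 \<in> space (prob_algebra (act_space K))
          \<and> (\<lambda>(x, y). sigma x y) \<in> measurable (act_space K \<Otimes>\<^sub>M act_space K) (prob_algebra (act_space K))
          \<and> (\<forall>x\<in>{0..K}. \<forall>y\<in>{0..K}.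
               u_X b c x y - gamma
                 = psi x - lam * (\<integral>s. psi s \<partial>(sigma x y)) - (1 - lam) * (\<integral>s. psi s \<partial>sigma0)))"
proof (intro notI, elim exE conjE)
  fix psi sigma0 sigma B
  assume psi: "psi \<in> borel_measurable (act_space K)"
    and psi_bound: "\<forall>s\<in>{0..K}. \<bar>psi s\<bar> \<le> B"
    and "sigma0 \<in> space (prob_algebra (act_space K))"
    and kernel: "(\<lambda>(x, y). sigma x y) \<in> measurable (act_space K \<Otimes>\<^sub>M act_space K) (prob_algebra (act_space K))"
    and identity: "\<forall>x\<in>{0..K}. \<forall>y\<in>{0..K}. u_X b c x y - gamma
                     = psi x - lam * (\<integral>s. psi s \<partial>(sigma x y)) - (1 - lam) * (\<integral>s. psi s \<partial>sigma0)"
  have "0 < K" and "c K < b K"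
    using assms(1) by (auto simp: donation_game_def)
  define M where "M = (SUP s\<in>{0..K}. psi s)"
  define m where "m = (INF s\<in>{0..K}. psi s)"
  have "bdd_above (psi ` {0..K})" "bdd_below (psi ` {0..K})"
    using psi_bound by (auto simp: bdd_above_def bdd_below_def abs_le_iff intro: minus_le_iff[THEN iffD1])
  then have psi_bounds: "m \<le> psi s \<and> psi s \<le> M" if "s \<in> {0..K}" for s
    using that by (auto simp: M_def m_def intro: cSUP_upper cINF_lower)
  have continuation_bounds: "m \<le> (\<integral>s. psi s \<partial>sigma x y) \<and> (\<integral>s. psi s \<partial>sigma x y) \<le> M"
    if "x \<in> {0..K}" "y \<in> {0..K}" for x y
    using measurable_space[OF kernel, of "(x, y)"] that psi psi_bounds
    by (intro integral_act_space_between_bounds) (auto simp: space_pair_measure)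
  have "psi x1 - psi x2 \<le> lam * (M - m) + c K - b K" if "x1 \<in> {0..K}" "x2 \<in> {0..K}" for x1 x2
    using donation_game_psi_gap[OF assms(1,2), where psi = psi and v = "\<lambda>x y. \<integral>s. psi s \<partial>sigma x y"]
      identity continuation_bounds that by blast
  then have "M - m \<le> lam * (M - m) + c K - b K"
    unfolding M_def m_def using \<open>0 < K\<close> \<open>bdd_below _\<close> by (intro SUP_minus_INF_le) auto
  moreover have "m \<le> M"
    using psi_bounds[of 0] \<open>0 < K\<close> by simp
  then have "lam * (M - m) \<le> M - m"
    using mult_right_mono[of lam 1 "M - m"] \<open>lam < 1\<close> by simp
  ultimately show False
    using \<open>c K < b K\<close> by linarith
qed

end
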